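(* Let $d\in\{2,3\}$, $r>\frac{d+1}{2}$, $\beta>0$, and $\mathbf u,\mathbf v,\mathbf w\in H_{\mathbb C}$ with $\|A^{1/4}\mathbf u\|_\beta,\|A^{1/4}\mathbf v\|_\beta,\|A^{1/4}\mathbf w\|_\beta<\infty$. Then $$|\langle B(\mathbf u,\mathbf v),A^{r}e^{2\beta A^{1/2}}\mathbf w\rangle|\le C\,2^rC_W(r)\Big(\|\mathbf v\|_\beta\|A^{1/4}\mathbf u\|_\beta\|A^{1/4}\mathbf w\|_\beta+\|\mathbf u\|_\beta\|A^{1/4}\mathbf v\|_\beta\|A^{1/4}\mathbf w\|_\beta\Big),$$ with $C>0$ depending only on $d$.
   Context: Periodic domain $\Omega=[0,2\pi]^d$, $H$ = real mean-zero divergence-free $L^2$ vector fields, $H_{\mathbb C}=H+iH$ with sesquilinear $L^2$ inner product. $A=-\Delta$ acts by multiplication by $|\mathbf k|^2$ on Fourier coefficients. $\|\mathbf f\|_\beta=\|A^{r/2}e^{\beta A^{1/2}}\mathbf f\|$. $B(\mathbf u,\mathbf v)=\mathbb P(\mathbf u\cdot\nabla\mathbf v)$, $\mathbb P$ the Leray–Helmholtz projection, extended complex-bilinearly. $C_W(r)=\frac{1}{\pi 2^{d-1}}\frac{2r-d}{2r-1-d}$. *)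

theory Defs
  imports "HOL-Analysis.Analysis"
begin

text \<open>Fields on the torus [0,2pi]^d are represented by their Fourier coefficients:
  f(x) = sum over k in Z^d of (f k) e^{i k.x}, with f k a vector in C^d.
  The dimension d is CARD('d).\<close>

type_synonym ('d) cfield = "int ^ 'd \<Rightarrow> complex ^ 'd"

definition knorm2 :: "int ^ ('d::finite) \<Rightarrow> real" where
  "knorm2 k = (\<Sum>i\<in>UNIV. (real_of_int (k $ i))\<^sup>2)"

definition kmag :: "int ^ ('d::finite) \<Rightarrow> real" where
  "kmag k = sqrt (knorm2 k)"

definition vnorm2 :: "complex ^ ('d::finite) \<Rightarrow> real" where
  "vnorm2 a = (\<Sum>i\<in>UNIV. (cmod (a $ i))\<^sup>2)"

text \<open>Membership in H_C: mean zero, divergence free, square integrable.\<close>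
definition in_HC :: "('d::finite) cfield \<Rightarrow> bool" where
  "in_HC u \<longleftrightarrow> u 0 = 0
     \<and> (\<forall>k. (\<Sum>i\<in>UNIV. of_int (k $ i) * (u k $ i)) = 0)
     \<and> (\<lambda>k. vnorm2 (u k)) summable_on UNIV"

text \<open>L2 inner product and norm on [0,2pi]^d (Parseval).\<close>
definition inner_L2 :: "('d::finite) cfield \<Rightarrow> ('d::finite) cfield \<Rightarrow> complex" where
  "inner_L2 f g = of_real ((2 * pi) ^ CARD('d)) *
      (\<Sum>\<^sub>\<infinity>k. \<Sum>i\<in>UNIV. f k $ i * cnj (g k $ i))"

definition L2norm :: "('d::finite) cfield \<Rightarrow> real" where
  "L2norm f = sqrt ((2 * pi) ^ CARD('d) * (\<Sum>\<^sub>\<infinity>k. vnorm2 (f k)))"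

text \<open>A^s (A = -Laplacian, multiplier |k|^2) and e^{beta A^{1/2}} (multiplier e^{beta |k|}).\<close>
definition Apow :: "real \<Rightarrow> ('d::finite) cfield \<Rightarrow> ('d::finite) cfield" where
  "Apow s f = (\<lambda>k. (knorm2 k powr s) *\<^sub>R f k)"

definition expA :: "real \<Rightarrow> ('d::finite) cfield \<Rightarrow> ('d::finite) cfield" where
  "expA b f = (\<lambda>k. exp (b * kmag k) *\<^sub>R f k)"

definition gev_norm :: "real \<Rightarrow> real \<Rightarrow> ('d::finite) cfield \<Rightarrow> real" where
  "gev_norm r b f = L2norm (Apow (r / 2) (expA b f))"

definition gev_finite :: "real \<Rightarrow> real \<Rightarrow> ('d::finite) cfield \<Rightarrow> bool" where
  "gev_finite r b f \<longleftrightarrow> (\<lambda>k. vnorm2 (Apow (r / 2) (expA b f) k)) summable_on UNIV"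

text \<open>Fourier coefficients of u . grad v:  sum over j+l=k of (u^(j) . i l) v^(l).\<close>
definition convect :: "('d::finite) cfield \<Rightarrow> ('d::finite) cfield \<Rightarrow> ('d::finite) cfield" where
  "convect u v = (\<lambda>k. \<chi> m. \<Sum>\<^sub>\<infinity>j.
      (\<Sum>i\<in>UNIV. u j $ i * (\<i> * of_int ((k - j) $ i))) * (v (k - j) $ m))"

definition leray :: "('d::finite) cfield \<Rightarrow> ('d::finite) cfield" where
  "leray f = (\<lambda>k. if k = 0 then f k else
      (\<chi> m. f k $ m - (\<Sum>i\<in>UNIV. of_int (k $ i) * f k $ i) * of_int (k $ m)
                         / complex_of_real (knorm2 k)))"

definition Bop :: "('d::finite) cfield \<Rightarrow> ('d::finite) cfield \<Rightarrow> ('d::finite) cfield" where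
  "Bop u v = leray (convect u v)"

definition C_W :: "nat \<Rightarrow> real \<Rightarrow> real" where
  "C_W d r = 1 / (pi * 2 ^ (d - 1)) * (2 * r - real d) / (2 * r - 1 - real d)"

end

theory Submission
  imports Defs
begin

text \<open>In Fourier variables the pairing is a double sum over frequencies \<open>k\<close> and \<open>j\<close> of
  \<open>|k|^(2r) exp(2\<beta>|k|) |w\<^sub>k| |u\<^sub>j| |k - j| |v\<^sub>k\<^sub>-\<^sub>j|\<close>; the Leray projection drops out because
  \<open>A^r exp(2\<beta>A^(1/2)) w\<close> is divergence free.  As \<open>|k| \<le> |j| + |k - j|\<close>, this weight is at most
  \<open>2^r\<close> times a sum of two terms, each of which is \<open>|j|^(-r)\<close> (or \<open>|k - j|^(-r)\<close>) times a product
  of three Gevrey weights.  Two applications of Cauchy--Schwarz bound the double sum by the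
  \<open>\<ell>\<^sup>2\<close>-norm of \<open>|j|^(-r)\<close> times the Gevrey norms, and \<open>\<Sum> |j|^(-2r) \<le> \<Sum>\<^sub>j\<^sub>\<noteq>\<^sub>0 |j|^(-(d+1)) < \<infinity>\<close>
  because \<open>2r > d + 1\<close>; the latter sum converges by comparison with a product of one-dimensional
  series.  This constant does not depend on \<open>r\<close>, and \<open>C_W(r)\<close> is bounded below by
  \<open>1/(\<pi> 2^(d-1))\<close>.\<close>

definition real_of_int_vec :: "int ^ 'd \<Rightarrow> real ^ 'd" where
  "real_of_int_vec k = (\<chi> i. real_of_int (k $ i))"

lemma knorm2_eq_norm: "knorm2 k = (norm (real_of_int_vec k))\<^sup>2"
  unfolding knorm2_def real_of_int_vec_def norm_vec_def L2_set_def
  by (simp add: sum_nonneg)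

lemma kmag_eq_norm: "kmag k = norm (real_of_int_vec k)"
  unfolding kmag_def knorm2_eq_norm by simp

lemma knorm2_eq_kmag: "knorm2 k = (kmag k)\<^sup>2"
  by (simp add: knorm2_eq_norm kmag_eq_norm)

lemma kmag_nonneg: "0 \<le> kmag k"
  by (simp add: kmag_eq_norm)

lemma kmag_add_le: "kmag (j + l) \<le> kmag j + kmag l"
proof -
  have "real_of_int_vec (j + l) = real_of_int_vec j + real_of_int_vec l"
    by (simp add: real_of_int_vec_def vec_eq_iff)
  then show ?thesis
    unfolding kmag_eq_norm by (simp add: norm_triangle_ineq)
qed

lemma knorm2_ge_1:
  fixes k :: "int ^ 'd::finite"
  assumes "k \<noteq> 0"
  shows "1 \<le> knorm2 k"
proof -
  obtain i where i: "k $ i \<noteq> 0"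
    using assms by (auto simp: vec_eq_iff)
  then have "1 \<le> \<bar>real_of_int (k $ i)\<bar>"
    by linarith
  then have "1 \<le> (real_of_int (k $ i))\<^sup>2"
    by (metis power2_abs one_le_power)
  also have "\<dots> \<le> knorm2 k"
    unfolding knorm2_def by (rule member_le_sum) auto
  finally show ?thesis .
qed

lemma kmag_ge_1: "k \<noteq> 0 \<Longrightarrow> 1 \<le> kmag k"
  unfolding kmag_def using knorm2_ge_1 by simp

lemma knorm2_powr: "knorm2 k powr s = kmag k powr (2 * s)"
proof (cases "kmag k = 0")
  case True
  then show ?thesis by (simp add: knorm2_eq_kmag)
next
  case False
  then have "knorm2 k = kmag k powr 2"
    using kmag_nonneg[of k] by (simp add: knorm2_eq_kmag powr_realpow)
  then show ?thesis
    by (simp add: powr_powr)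
qed

lemma vnorm2_eq_norm: "vnorm2 a = (norm a)\<^sup>2"
  unfolding vnorm2_def norm_vec_def L2_set_def by (simp add: sum_nonneg)

lemma norm_vec_scalar_mult: "norm (\<chi> m. (c::complex) * x $ m) = cmod c * norm x"
  unfolding norm_vec_def by (simp add: norm_mult L2_set_right_distrib)

lemma cmod_sum_mult_cnj_le:
  "cmod (\<Sum>i\<in>UNIV. (a::complex^'d::finite) $ i * cnj (b $ i)) \<le> norm a * norm b"
proof -
  have "cmod (\<Sum>i\<in>UNIV. a $ i * cnj (b $ i)) \<le> (\<Sum>i\<in>UNIV. cmod (a $ i) * cmod (b $ i))"
    by (rule order_trans[OF norm_sum]) (simp add: norm_mult)
  also have "\<dots> \<le> norm a * norm b"
    using L2_set_mult_ineq[of "\<lambda>i. cmod (a $ i)" "\<lambda>i. cmod (b $ i)" UNIV]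
    by (simp add: norm_vec_def)
  finally show ?thesis .
qed

lemma cmod_sum_mult_grad_le:
  "cmod (\<Sum>i\<in>UNIV. (a::complex^'d::finite) $ i * (\<i> * of_int (l $ i))) \<le> norm a * kmag l"
proof -
  have "cmod (\<Sum>i\<in>UNIV. a $ i * (\<i> * of_int (l $ i)))
      \<le> (\<Sum>i\<in>UNIV. cmod (a $ i) * \<bar>real_of_int (l $ i)\<bar>)"
    by (rule order_trans[OF norm_sum]) (simp add: norm_mult)
  also have "\<dots> \<le> norm a * kmag l"
    using L2_set_mult_ineq[of "\<lambda>i. cmod (a $ i)" "\<lambda>i. \<bar>real_of_int (l $ i)\<bar>" UNIV]
    by (simp add: norm_vec_def kmag_eq_norm real_of_int_vec_def)
  finally show ?thesis .
qed

definition l2norm :: "('a \<Rightarrow> real) \<Rightarrow> real" where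
  "l2norm x = sqrt (\<Sum>\<^sub>\<infinity>k. (x k)\<^sup>2)"

lemma l2norm_nonneg: "0 \<le> l2norm x"
  unfolding l2norm_def by (simp add: infsum_nonneg)

lemma L2_set_le_l2norm:
  assumes "(\<lambda>k. (x k)\<^sup>2) summable_on UNIV" "finite K" "inj_on g K"
  shows "L2_set (\<lambda>k. x (g k)) K \<le> l2norm x"
proof -
  have "(\<Sum>k\<in>K. (x (g k))\<^sup>2) = (\<Sum>k\<in>g ` K. (x k)\<^sup>2)"
    using assms(3) by (simp add: sum.reindex)
  also have "\<dots> \<le> (\<Sum>\<^sub>\<infinity>k. (x k)\<^sup>2)"
    by (rule finite_sum_le_infsum[OF assms(1)]) (use assms(2) in auto)
  finally show ?thesis
    unfolding L2_set_def l2norm_def by simp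
qed

lemma sum_mult_le_l2norm:
  assumes "(\<lambda>k. (x k)\<^sup>2) summable_on UNIV" "(\<lambda>k. (y k)\<^sup>2) summable_on UNIV"
    and "finite K" "inj_on g1 K" "inj_on g2 K" "\<And>k. 0 \<le> x k" "\<And>k. 0 \<le> y k"
  shows "(\<Sum>k\<in>K. x (g1 k) * y (g2 k)) \<le> l2norm x * l2norm y"
proof -
  have "(\<Sum>k\<in>K. x (g1 k) * y (g2 k)) = (\<Sum>k\<in>K. \<bar>x (g1 k)\<bar> * \<bar>y (g2 k)\<bar>)"
    using assms(6,7) by simp
  also have "\<dots> \<le> L2_set (\<lambda>k. x (g1 k)) K * L2_set (\<lambda>k. y (g2 k)) K"
    by (rule L2_set_mult_ineq)
  also have "\<dots> \<le> l2norm x * l2norm y"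
    by (intro mult_mono L2_set_le_l2norm assms l2norm_nonneg L2_set_nonneg)
  finally show ?thesis .
qed

lemma convolution_summable:
  fixes x y :: "'a::ab_group_add \<Rightarrow> real"
  assumes "(\<lambda>k. (x k)\<^sup>2) summable_on UNIV" "(\<lambda>k. (y k)\<^sup>2) summable_on UNIV"
    and "\<And>k. 0 \<le> x k" "\<And>k. 0 \<le> y k"
  shows "(\<lambda>j. x j * y (k - j)) summable_on UNIV"
proof (rule nonneg_bdd_above_summable_on)
  have "sum (\<lambda>j. x j * y (k - j)) F \<le> l2norm x * l2norm y" if "finite F" for F
    using sum_mult_le_l2norm[OF assms(1,2) that, of id "\<lambda>j. k - j"] assms(3,4)
    by (simp add: inj_on_def)
  then show "bdd_above (sum (\<lambda>j. x j * y (k - j)) ` {F. F \<subseteq> UNIV \<and> finite F})"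
    by (auto intro!: bdd_aboveI2)
qed (use assms in auto)

text \<open>Cauchy--Schwarz in \<open>k\<close> for fixed \<open>j\<close>, then in \<open>j\<close>.\<close>

lemma triple_convolution_bound:
  fixes x y z h :: "'a::ab_group_add \<Rightarrow> real"
  assumes "(\<lambda>k. (x k)\<^sup>2) summable_on UNIV" "(\<lambda>k. (y k)\<^sup>2) summable_on UNIV"
    and "(\<lambda>k. (z k)\<^sup>2) summable_on UNIV" "(\<lambda>k. (h k)\<^sup>2) summable_on UNIV"
    and "\<And>k. 0 \<le> x k" "\<And>k. 0 \<le> y k" "\<And>k. 0 \<le> z k" "\<And>k. 0 \<le> h k"
  shows "(\<lambda>(k,j). z k * (h j * x j * y (k - j))) summable_on UNIV"
    and "(\<Sum>\<^sub>\<infinity>(k,j). z k * (h j * x j * y (k - j)))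
           \<le> l2norm z * (l2norm h * l2norm x * l2norm y)"
proof -
  let ?f = "\<lambda>(k,j). z k * (h j * x j * y (k - j))"
  let ?B = "l2norm z * (l2norm h * l2norm x * l2norm y)"
  have nonneg: "0 \<le> ?f p" for p
    using assms(5-8) by (auto simp: case_prod_beta)
  have finite_sums: "sum ?f F \<le> ?B" if F: "finite F" for F
  proof -
    define K where "K = fst ` F"
    define J where "J = snd ` F"
    have KJ: "finite K" "finite J"
      using F by (auto simp: K_def J_def)
    have "F \<subseteq> K \<times> J"
      by (force simp: K_def J_def)
    then have "sum ?f F \<le> sum ?f (K \<times> J)"
      by (intro sum_mono2) (use KJ nonneg in auto)
    also have "\<dots> = (\<Sum>j\<in>J. h j * x j * (\<Sum>k\<in>K. z k * y (k - j)))"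
      by (simp add: sum.cartesian_product[symmetric] sum.swap[of _ K] sum_distrib_left mult_ac)
    also have "\<dots> \<le> (\<Sum>j\<in>J. h j * x j * (l2norm z * l2norm y))"
    proof (rule sum_mono)
      fix j
      have "(\<Sum>k\<in>K. z k * y (k - j)) \<le> l2norm z * l2norm y"
        using sum_mult_le_l2norm[OF assms(3,2) KJ(1), of id "\<lambda>k. k - j"] assms(6,7)
        by (simp add: inj_on_def)
      then show "h j * x j * (\<Sum>k\<in>K. z k * y (k - j)) \<le> h j * x j * (l2norm z * l2norm y)"
        using assms(5,8) by (intro mult_left_mono) auto
    qed
    also have "\<dots> = (\<Sum>j\<in>J. h j * x j) * (l2norm z * l2norm y)"
      by (simp add: sum_distrib_right)
    also have "\<dots> \<le> (l2norm h * l2norm x) * (l2norm z * l2norm y)"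
      using sum_mult_le_l2norm[OF assms(4,1) KJ(2), of id id] assms(5,8)
      by (intro mult_right_mono) (auto intro: mult_nonneg_nonneg l2norm_nonneg)
    finally show ?thesis
      by (simp add: mult_ac)
  qed
  show summable: "?f summable_on UNIV"
    by (rule nonneg_bdd_above_summable_on) (use nonneg finite_sums in \<open>auto intro!: bdd_aboveI2\<close>)
  show "(\<Sum>\<^sub>\<infinity>p. ?f p) \<le> ?B"
    by (rule infsum_le_finite_sums[OF summable finite_sums])
qed

section \<open>Summability of \<open>|k|\<^sup>-\<^sup>s\<close> over \<open>\<int>\<^sup>d\<close>\<close>

lemma summable_on_one_plus_sq_powr:
  assumes "a > 1/2"
  shows "(\<lambda>n::int. (1 + (real_of_int n)\<^sup>2) powr (-a)) summable_on UNIV"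
proof -
  let ?f = "\<lambda>n::int. (1 + (real_of_int n)\<^sup>2) powr (-a)"
  have "summable (\<lambda>n::nat. real n powr (-2*a))"
    using assms by (subst summable_real_powr_iff) simp
  then have "summable (\<lambda>n::nat. ?f (int n))"
  proof (rule summable_comparison_test')
    fix n :: nat
    assume "n \<ge> 1"
    then have n: "real n > 0" by simp
    have "real n powr 2 = (real n)\<^sup>2"
      using powr_realpow[OF n, of 2] by simp
    then have "real n powr (-2*a) = ((real n)\<^sup>2) powr (-a)"
      using powr_powr[of "real n" 2 "-a"] by simp
    also have "\<dots> \<ge> (1 + (real n)\<^sup>2) powr (-a)"
      by (rule powr_mono2') (use assms n in auto)
    finally show "norm (?f (int n)) \<le> real n powr (-2*a)"
      by simp
  qed
  then have summable_nat: "(\<lambda>n::nat. ?f (int n)) summable_on UNIV"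
    by (subst summable_on_UNIV_nonneg_real_iff) auto
  have pos: "?f summable_on range int"
    using summable_nat by (subst summable_on_reindex) (auto simp: o_def)
  have neg: "?f summable_on range (\<lambda>n::nat. - int n)"
    using summable_nat by (subst summable_on_reindex) (auto simp: o_def inj_on_def)
  have "n \<in> range int \<union> range (\<lambda>n::nat. - int n)" for n
  proof (cases "n \<ge> 0")
    case True
    then have "n = int (nat n)" by simp
    then show ?thesis by blast
  next
    case False
    then have "n = - int (nat (- n))" by simp
    then show ?thesis by blast
  qed
  then have "UNIV = range int \<union> range (\<lambda>n::nat. - int n)"
    by auto
  then show ?thesis
    using summable_on_union[OF pos neg] by simp
qed

lemma summable_on_prod_coordinates:
  fixes f :: "'a \<Rightarrow> real"
  assumes "f summable_on UNIV" "\<And>n. 0 \<le> f n"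
  shows "(\<lambda>g::'d::finite \<Rightarrow> 'a. \<Prod>i\<in>UNIV. f (g i)) summable_on UNIV"
proof (rule nonneg_bdd_above_summable_on)
  show "0 \<le> (\<Prod>i\<in>UNIV. f (g i))" for g
    by (simp add: assms(2) prod_nonneg)
  have finite_sums: "sum (\<lambda>g. \<Prod>i\<in>UNIV. f (g i)) F \<le> (\<Prod>i\<in>(UNIV::'d set). \<Sum>\<^sub>\<infinity>n. f n)"
    if F: "finite F" for F :: "('d \<Rightarrow> 'a) set"
  proof -
    define B where "B i = (\<lambda>g. g i) ` F" for i
    have finite_B: "finite (B i)" for i
      using F by (simp add: B_def)
    have finite_PiE_B: "finite (PiE UNIV B)"
      by (rule finite_PiE) (auto simp: finite_B)
    have "sum (\<lambda>g. \<Prod>i\<in>UNIV. f (g i)) F \<le> sum (\<lambda>g. \<Prod>i\<in>UNIV. f (g i)) (PiE UNIV B)"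
      by (rule sum_mono2[OF finite_PiE_B]) (auto simp: B_def PiE_UNIV_domain assms(2) prod_nonneg)
    also have "\<dots> = (\<Prod>i\<in>UNIV. sum f (B i))"
      using infsum_prod_PiE_abs[of UNIV "\<lambda>_. f" B] finite_PiE_B by (simp add: finite_B)
    also have "\<dots> \<le> (\<Prod>i\<in>(UNIV::'d set). \<Sum>\<^sub>\<infinity>n. f n)"
      by (rule prod_mono)
         (use finite_sum_le_infsum[OF assms(1) finite_B] assms(2) in \<open>auto intro: sum_nonneg\<close>)
    finally show ?thesis .
  qed
  show "bdd_above (sum (\<lambda>g::'d \<Rightarrow> 'a. \<Prod>i\<in>UNIV. f (g i)) ` {F. F \<subseteq> UNIV \<and> finite F})"
    by (rule bdd_aboveI2[where M = "\<Prod>i\<in>(UNIV::'d set). \<Sum>\<^sub>\<infinity>n. f n"]) (use finite_sums in auto)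
qed

lemma summable_on_prod_vec_nth:
  fixes f :: "'a \<Rightarrow> real"
  assumes "f summable_on UNIV" "\<And>n. 0 \<le> f n"
  shows "(\<lambda>j::'a^'d::finite. \<Prod>i\<in>UNIV. f (j $ i)) summable_on UNIV"
proof -
  have "bij (vec_lambda :: ('d \<Rightarrow> 'a) \<Rightarrow> 'a^'d)"
    by (metis bij_betw_def inj_def surj_def vec_lambda_inverse vec_lambda_eta UNIV_I)
  then show ?thesis
    using summable_on_reindex_bij_betw[of "vec_lambda :: ('d \<Rightarrow> 'a) \<Rightarrow> 'a^'d" UNIV UNIV
        "\<lambda>j. \<Prod>i\<in>UNIV. f (j $ i)"] summable_on_prod_coordinates[OF assms, where 'd='d]
    by simp
qed

text \<open>Since \<open>1 + k\<^sub>i\<^sup>2 \<le> 2|k|\<^sup>2\<close> for \<open>k \<noteq> 0\<close>, the radial weight is dominated by a product of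
  one-dimensional weights.\<close>

lemma kmag_powr_le_prod:
  fixes j :: "int ^ 'd::finite"
  assumes "s \<ge> 0"
  shows "kmag j powr (-s)
    \<le> 2 powr (s/2) * (\<Prod>i\<in>UNIV. (1 + (real_of_int (j $ i))\<^sup>2) powr (- s / (2 * CARD('d))))"
proof (cases "j = 0")
  case True
  then show ?thesis by (simp add: kmag_def knorm2_def prod_nonneg)
next
  case False
  define d where "d = real CARD('d)"
  define q where "q = knorm2 j"
  have d: "d > 0" by (simp add: d_def)
  have q: "q \<ge> 1"
    using knorm2_ge_1[OF False] by (simp add: q_def)
  have "(\<Prod>i\<in>UNIV. 1 + (real_of_int (j $ i))\<^sup>2) \<le> (\<Prod>i\<in>(UNIV::'d set). 2 * q)"
  proof (rule prod_mono)
    fix i :: 'd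
    have "(real_of_int (j $ i))\<^sup>2 \<le> q"
      unfolding q_def knorm2_def by (rule member_le_sum) auto
    then show "0 \<le> 1 + (real_of_int (j $ i))\<^sup>2 \<and> 1 + (real_of_int (j $ i))\<^sup>2 \<le> 2 * q"
      using q by simp
  qed
  also have "\<dots> = (2 * q) powr d"
    using q by (simp add: d_def powr_realpow)
  finally have prod_le: "(\<Prod>i\<in>UNIV. 1 + (real_of_int (j $ i))\<^sup>2) \<le> (2 * q) powr d" .
  have "kmag j powr (-s) = q powr (- s/2)"
    by (simp add: q_def knorm2_powr)
  then have "2 powr (- s/2) * kmag j powr (-s) = (2 * q) powr (- s/2)"
    by (simp add: powr_mult)
  also have "\<dots> = (2 * q) powr (d * (- s / (2 * d)))"
    using d by simp
  also have "\<dots> = ((2 * q) powr d) powr (- s / (2 * d))"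
    by (simp add: powr_powr)
  also have "\<dots> \<le> (\<Prod>i\<in>UNIV. 1 + (real_of_int (j $ i))\<^sup>2) powr (- s / (2 * d))"
    by (rule powr_mono2'[OF _ _ prod_le]) (use assms d in \<open>auto intro!: prod_pos add_pos_nonneg\<close>)
  also have "\<dots> = (\<Prod>i\<in>UNIV. (1 + (real_of_int (j $ i))\<^sup>2) powr (- s / (2 * d)))"
    by (simp add: prod_powr_distrib)
  finally have scaled: "2 powr (- s/2) * kmag j powr (-s)
      \<le> (\<Prod>i\<in>UNIV. (1 + (real_of_int (j $ i))\<^sup>2) powr (- s / (2 * d)))" .
  have "kmag j powr (-s) = 2 powr (s/2) * (2 powr (- s/2) * kmag j powr (-s))"
    by (simp add: mult.assoc[symmetric] powr_add[symmetric])
  also have "\<dots> \<le> 2 powr (s/2) * (\<Prod>i\<in>UNIV. (1 + (real_of_int (j $ i))\<^sup>2) powr (- s / (2 * d)))"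
    using scaled by (rule mult_left_mono) simp
  finally show ?thesis
    by (simp add: d_def)
qed

lemma summable_on_kmag_powr:
  assumes "s > real CARD('d)"
  shows "(\<lambda>k::int^'d::finite. kmag k powr (-s)) summable_on UNIV"
proof -
  define a where "a = s / (2 * real CARD('d))"
  have a: "a > 1/2"
    using assms by (simp add: a_def field_simps)
  have "(\<lambda>j::int^'d. 2 powr (s/2) * (\<Prod>i\<in>UNIV. (1 + (real_of_int (j $ i))\<^sup>2) powr (- a)))
      summable_on UNIV"
    by (intro summable_on_cmult_right summable_on_prod_vec_nth summable_on_one_plus_sq_powr[OF a]) simp
  then show ?thesis
  proof (rule summable_on_comparison_test)
    fix k :: "int^'d"
    show "kmag k powr (-s) \<le> 2 powr (s/2) * (\<Prod>i\<in>UNIV. (1 + (real_of_int (k $ i))\<^sup>2) powr (- a))"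
      using kmag_powr_le_prod[of s k] assms by (simp add: a_def)
  qed simp
qed

lemma kmag_powr_antimono:
  assumes "s \<le> t"
  shows "kmag k powr (-t) \<le> kmag k powr (-s)"
proof (cases "k = 0")
  case True
  then show ?thesis by (simp add: kmag_def knorm2_def)
next
  case False
  then show ?thesis
    using kmag_ge_1[OF False] assms by (intro powr_mono) auto
qed

definition gev_weight :: "real \<Rightarrow> real \<Rightarrow> 'd cfield \<Rightarrow> int^'d::finite \<Rightarrow> real" where
  "gev_weight \<beta> t f k = kmag k powr t * exp (\<beta> * kmag k) * norm (f k)"

lemma gev_weight_nonneg: "0 \<le> gev_weight \<beta> t f k"
  by (simp add: gev_weight_def)

lemma norm_Apow: "norm (Apow s f k) = kmag k powr (2 * s) * norm (f k)"
  by (simp add: Apow_def knorm2_powr)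

lemma norm_expA: "norm (expA b f k) = exp (b * kmag k) * norm (f k)"
  by (simp add: expA_def)

lemma vnorm2_Apow_expA: "vnorm2 (Apow (r/2) (expA \<beta> f) k) = (gev_weight \<beta> r f k)\<^sup>2"
  by (simp add: vnorm2_eq_norm norm_Apow norm_expA gev_weight_def mult_ac)

lemma vnorm2_Apow_expA_Apow_quarter:
  "vnorm2 (Apow (r/2) (expA \<beta> (Apow (1/4) f)) k) = (gev_weight \<beta> (r + 1/2) f k)\<^sup>2"
proof -
  have "kmag k powr r * kmag k powr (1/2) = kmag k powr (r + 1/2)"
    by (simp add: powr_add)
  then show ?thesis
    by (simp add: vnorm2_eq_norm norm_Apow norm_expA gev_weight_def mult_ac)
qed

lemma gev_finite_Apow_quarter_iff:
  "gev_finite r \<beta> (Apow (1/4) f) \<longleftrightarrow> (\<lambda>k. (gev_weight \<beta> (r + 1/2) f k)\<^sup>2) summable_on UNIV"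
  unfolding gev_finite_def vnorm2_Apow_expA_Apow_quarter ..

lemma gev_norm_eq_l2norm:
  "gev_norm r \<beta> f = sqrt ((2*pi)^CARD('d)) * l2norm (gev_weight \<beta> r (f :: 'd::finite cfield))"
  unfolding gev_norm_def L2norm_def vnorm2_Apow_expA l2norm_def by (simp add: real_sqrt_mult)

lemma gev_norm_nonneg: "0 \<le> gev_norm r \<beta> f"
  by (simp add: gev_norm_eq_l2norm l2norm_nonneg)

lemma gev_norm_Apow_quarter_eq_l2norm:
  "gev_norm r \<beta> (Apow (1/4) f)
    = sqrt ((2*pi)^CARD('d)) * l2norm (gev_weight \<beta> (r + 1/2) (f :: 'd::finite cfield))"
  unfolding gev_norm_def L2norm_def vnorm2_Apow_expA_Apow_quarter l2norm_def
  by (simp add: real_sqrt_mult)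

lemma gev_weight_mono:
  assumes "t \<le> t'"
  shows "gev_weight \<beta> t f k \<le> gev_weight \<beta> t' f k"
proof (cases "k = 0")
  case True
  then show ?thesis by (simp add: gev_weight_def kmag_def knorm2_def)
next
  case False
  then have "kmag k powr t \<le> kmag k powr t'"
    using kmag_ge_1 assms by (intro powr_mono) auto
  then show ?thesis
    unfolding gev_weight_def by (intro mult_right_mono) auto
qed

lemma summable_on_gev_weight_sq_mono:
  assumes "t \<le> t'" "(\<lambda>k. (gev_weight \<beta> t' f k)\<^sup>2) summable_on UNIV"
  shows "(\<lambda>k. (gev_weight \<beta> t f k)\<^sup>2) summable_on UNIV"
  by (rule summable_on_comparison_test[OF assms(2)])
     (use gev_weight_mono[OF assms(1)] in \<open>auto intro!: power_mono gev_weight_nonneg\<close>)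

lemma kmag_powr_mult_norm_le_gev_weight:
  assumes "\<beta> \<ge> 0" "s \<le> t"
  shows "kmag k powr s * norm (f k) \<le> gev_weight \<beta> t f k"
proof -
  have exp_ge_1: "1 \<le> exp (\<beta> * kmag k)"
    using assms(1) by (simp add: kmag_nonneg)
  have "kmag k powr s * norm (f k) \<le> gev_weight \<beta> s f k"
    using mult_right_mono[OF mult_left_mono[OF exp_ge_1, of "kmag k powr s"], of "norm (f k)"]
    by (simp add: gev_weight_def)
  also have "\<dots> \<le> gev_weight \<beta> t f k"
    using gev_weight_mono[OF assms(2)] .
  finally show ?thesis .
qed

text \<open>The weight vanishes at \<open>k = 0\<close> (as \<open>0 powr t = 0\<close>), hence the mean-zero hypothesis.\<close>

lemma norm_le_gev_weight:
  assumes "f 0 = 0" "\<beta> \<ge> 0" "t \<ge> 0"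
  shows "norm (f k) \<le> gev_weight \<beta> t f k"
proof (cases "k = 0")
  case True
  then show ?thesis using assms by (simp add: gev_weight_def)
next
  case False
  then have "kmag k \<noteq> 0"
    using kmag_ge_1 by fastforce
  then show ?thesis
    using kmag_powr_mult_norm_le_gev_weight[of \<beta> 0 t k f] assms by simp
qed

section \<open>Splitting the weight of the convection term\<close>

lemma powr_split_le:
  fixes a b c r :: real
  assumes a: "1 \<le> a" and b: "1 \<le> b" and c: "0 \<le> c" "c \<le> a + b" and r: "1/2 \<le> r"
  shows "c powr (r - 1/2) * b \<le> 2 powr r * (a powr (r + 1/2) + b powr (r + 1/2))"
proof -
  define M where "M = max a b"
  have M: "1 \<le> M" "b \<le> M"
    using a by (auto simp: M_def)
  have "c powr (r - 1/2) \<le> (2 * M) powr (r - 1/2)"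
    using c r by (intro powr_mono2) (auto simp: M_def)
  also have "\<dots> = 2 powr (r - 1/2) * M powr (r - 1/2)"
    using M by (simp add: powr_mult)
  also have "\<dots> \<le> 2 powr r * M powr (r - 1/2)"
    by (intro mult_right_mono) auto
  finally have "c powr (r - 1/2) * b \<le> 2 powr r * (M powr (r - 1/2) * b)"
    using b by (simp add: mult_right_mono mult.assoc)
  also have "M powr (r - 1/2) * b \<le> M powr (r - 1/2) * M powr 1"
    using M by (intro mult_left_mono) auto
  also have "\<dots> = M powr (r + 1/2)"
    by (simp only: powr_add[symmetric]) (simp add: algebra_simps)
  also have "\<dots> \<le> a powr (r + 1/2) + b powr (r + 1/2)"
    by (simp add: M_def max_def)
  finally show ?thesis
    by simp
qed

text \<open>Since \<open>|k| \<le> |j| + |k - j|\<close>, the weight \<open>|k|^(2r) exp(2\<beta>|k|)\<close> of the test field and the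
  derivative \<open>|k - j|\<close> falling on \<open>v\<close> can be redistributed: \<open>w\<close> keeps \<open>r + 1/2\<close> derivatives,
  one of \<open>u\<close>, \<open>v\<close> receives \<open>r + 1/2\<close> and the other \<open>r\<close> at the price of a factor \<open>|\<cdot>|^(-r)\<close>.\<close>

lemma convection_weight_le:
  fixes u v w :: "'d::finite cfield"
  assumes u0: "u 0 = 0" and v0: "v 0 = 0" and r: "1/2 \<le> r" and \<beta>: "0 \<le> \<beta>"
  shows "norm (Apow r (expA (2*\<beta>) w) k) * (norm (u j) * kmag (k - j) * norm (v (k - j)))
    \<le> 2 powr r * gev_weight \<beta> (r + 1/2) w k *
       (kmag j powr (-r) * gev_weight \<beta> r u j * gev_weight \<beta> (r + 1/2) v (k - j)
        + kmag (k - j) powr (-r) * gev_weight \<beta> r v (k - j) * gev_weight \<beta> (r + 1/2) u j)"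
proof (cases "u j = 0 \<or> v (k - j) = 0")
  case True
  then show ?thesis
    by (auto intro!: mult_nonneg_nonneg add_nonneg_nonneg simp: gev_weight_nonneg)
next
  case False
  define a b c where "a = kmag j" and "b = kmag (k - j)" and "c = kmag k"
  define U V W where "U = norm (u j)" and "V = norm (v (k - j))" and "W = norm (w k)"
  have a: "1 \<le> a" and b: "1 \<le> b"
    using False u0 v0 by (auto simp: a_def b_def intro!: kmag_ge_1)
  have c: "0 \<le> c" "c \<le> a + b"
    using kmag_add_le[of j "k - j"] by (simp_all add: a_def b_def c_def kmag_nonneg)
  have nonneg: "0 \<le> U" "0 \<le> V" "0 \<le> W"
    by (simp_all add: U_def V_def W_def)
  have exp_le: "exp (\<beta> * c) \<le> exp (\<beta> * a) * exp (\<beta> * b)"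
    using mult_left_mono[OF c(2) \<beta>] by (simp add: exp_add[symmetric] algebra_simps)
  have "norm (Apow r (expA (2*\<beta>) w) k) * (norm (u j) * kmag (k - j) * norm (v (k - j)))
      = (c powr (r + 1/2) * exp (\<beta> * c) * W * U * V) * (c powr (r - 1/2) * b) * exp (\<beta> * c)"
  proof -
    have "c powr (2 * r) = c powr (r + 1/2) * c powr (r - 1/2)"
      by (simp add: powr_add[symmetric])
    moreover have "exp (2 * \<beta> * c) = exp (\<beta> * c) * exp (\<beta> * c)"
      by (simp add: exp_add[symmetric])
    ultimately show ?thesis
      by (simp add: norm_Apow norm_expA a_def b_def c_def U_def V_def W_def mult_ac)
  qed
  also have "\<dots> \<le> (c powr (r + 1/2) * exp (\<beta> * c) * W * U * V)
      * (2 powr r * (a powr (r + 1/2) + b powr (r + 1/2))) * (exp (\<beta> * a) * exp (\<beta> * b))"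
    by (rule mult_mono[OF mult_left_mono[OF powr_split_le[OF a b c r]] exp_le])
       (use nonneg in auto)
  also have "\<dots> = 2 powr r * (c powr (r + 1/2) * exp (\<beta> * c) * W) *
       (exp (\<beta> * a) * U * (b powr (r + 1/2) * exp (\<beta> * b) * V)
        + exp (\<beta> * b) * V * (a powr (r + 1/2) * exp (\<beta> * a) * U))"
    by (simp add: algebra_simps)
  also have "\<dots> = 2 powr r * gev_weight \<beta> (r + 1/2) w k *
       (kmag j powr (-r) * gev_weight \<beta> r u j * gev_weight \<beta> (r + 1/2) v (k - j)
        + kmag (k - j) powr (-r) * gev_weight \<beta> r v (k - j) * gev_weight \<beta> (r + 1/2) u j)"
  proof -
    have "kmag j powr (-r) * gev_weight \<beta> r u j = exp (\<beta> * a) * U"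
      using a by (simp add: gev_weight_def a_def U_def powr_minus)
    moreover have "kmag (k - j) powr (-r) * gev_weight \<beta> r v (k - j) = exp (\<beta> * b) * V"
      using b by (simp add: gev_weight_def b_def V_def powr_minus)
    ultimately show ?thesis
      by (simp only:) (simp add: gev_weight_def a_def b_def c_def U_def V_def W_def)
  qed
  finally show ?thesis .
qed

section \<open>The convection term in Fourier variables\<close>

lemma divergence_free_Apow_expA:
  assumes "in_HC w"
  shows "(\<Sum>i\<in>UNIV. of_int (k $ i) * Apow s (expA b w) k $ i) = 0"
proof -
  have "(\<Sum>i\<in>UNIV. of_int (k $ i) * Apow s (expA b w) k $ i)
      = of_real (knorm2 k powr s * exp (b * kmag k)) * (\<Sum>i\<in>UNIV. of_int (k $ i) * w k $ i)"
    by (simp add: Apow_def expA_def scaleR_conv_of_real[where 'a=complex] sum_distrib_left mult_ac)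
  then show ?thesis
    using assms by (simp add: in_HC_def)
qed

lemma leray_inner_divergence_free:
  assumes "(\<Sum>i\<in>UNIV. of_int (k $ i) * g $ i) = (0::complex)"
  shows "(\<Sum>i\<in>UNIV. leray f k $ i * cnj (g $ i)) = (\<Sum>i\<in>UNIV. f k $ i * cnj (g $ i))"
proof (cases "k = 0")
  case True
  then show ?thesis by (simp add: leray_def)
next
  case False
  define S where "S = (\<Sum>i\<in>UNIV. of_int (k $ i) * f k $ i) / complex_of_real (knorm2 k)"
  have orth: "(\<Sum>i\<in>UNIV. of_int (k $ i) * cnj (g $ i)) = 0"
    using arg_cong[OF assms, of cnj] by simp
  have "(\<Sum>i\<in>UNIV. leray f k $ i * cnj (g $ i))
      = (\<Sum>i\<in>UNIV. f k $ i * cnj (g $ i) - S * (of_int (k $ i) * cnj (g $ i)))"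
    using False by (intro sum.cong) (auto simp: leray_def S_def algebra_simps)
  also have "\<dots> = (\<Sum>i\<in>UNIV. f k $ i * cnj (g $ i)) - S * (\<Sum>i\<in>UNIV. of_int (k $ i) * cnj (g $ i))"
    by (simp add: sum_subtractf sum_distrib_left)
  finally show ?thesis
    using orth by simp
qed

lemma norm_convect_le:
  assumes "(\<lambda>j. norm (u j) * kmag (k - j) * norm (v (k - j))) summable_on UNIV"
  shows "norm (convect u v k) \<le> (\<Sum>\<^sub>\<infinity>j. norm (u j) * kmag (k - j) * norm (v (k - j)))"
proof -
  define F where
    "F j = (\<chi> m. (\<Sum>i\<in>UNIV. u j $ i * (\<i> * of_int ((k - j) $ i))) * v (k - j) $ m)" for j
  have norm_F: "norm (F j) \<le> norm (u j) * kmag (k - j) * norm (v (k - j))" for j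
    unfolding F_def norm_vec_scalar_mult
    by (intro mult_right_mono cmod_sum_mult_grad_le) auto
  have abs_summable: "(\<lambda>j. norm (F j)) summable_on UNIV"
    by (rule summable_on_comparison_test[OF assms norm_F]) auto
  then have F_summable: "F summable_on UNIV"
    by (rule abs_summable_summable)
  have "convect u v k = infsum F UNIV"
  proof (subst vec_eq_iff, intro allI)
    fix m
    have "((\<lambda>j. F j $ m) has_sum infsum F UNIV $ m) UNIV"
      by (rule has_sum_bounded_linear[OF bounded_linear_vec_nth has_sum_infsum[OF F_summable]])
    then have "(\<Sum>\<^sub>\<infinity>j. F j $ m) = infsum F UNIV $ m"
      by (rule infsumI)
    then show "convect u v k $ m = infsum F UNIV $ m"
      by (simp add: convect_def F_def)
  qed
  also have "norm \<dots> \<le> (\<Sum>\<^sub>\<infinity>j. norm (F j))"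
    by (rule norm_infsum_bound[OF abs_summable])
  also have "\<dots> \<le> (\<Sum>\<^sub>\<infinity>j. norm (u j) * kmag (k - j) * norm (v (k - j)))"
    by (rule infsum_mono[OF abs_summable assms norm_F])
  finally show ?thesis .
qed

lemma summable_on_convection_term:
  assumes u0: "u 0 = 0" and \<beta>: "\<beta> \<ge> 0" and t: "t \<ge> 1"
    and su: "(\<lambda>k. (gev_weight \<beta> t u k)\<^sup>2) summable_on UNIV"
    and sv: "(\<lambda>k. (gev_weight \<beta> t v k)\<^sup>2) summable_on UNIV"
  shows "(\<lambda>j. norm (u j) * kmag (k - j) * norm (v (k - j))) summable_on UNIV"
proof -
  have "norm (u j) * (kmag (k - j) * norm (v (k - j)))
      \<le> gev_weight \<beta> t u j * gev_weight \<beta> t v (k - j)" for j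
  proof (rule mult_mono)
    show "norm (u j) \<le> gev_weight \<beta> t u j"
      using norm_le_gev_weight[of u \<beta> t j] u0 \<beta> t by simp
    show "kmag (k - j) * norm (v (k - j)) \<le> gev_weight \<beta> t v (k - j)"
      using kmag_powr_mult_norm_le_gev_weight[of \<beta> 1 t "k - j" v] \<beta> t
      by (simp add: kmag_nonneg)
  qed (simp_all add: gev_weight_nonneg kmag_nonneg)
  then show ?thesis
    by (intro summable_on_comparison_test[OF convolution_summable[OF su sv]])
       (auto simp: gev_weight_nonneg kmag_nonneg mult.assoc)
qed

text \<open>The Leray projection drops out against the divergence-free field \<open>G\<close>, which leaves a double
  sum over the interacting frequencies.\<close>

lemma cmod_inner_Bop_le:
  fixes u v G :: "'d::finite cfield"
  assumes div: "\<And>k. (\<Sum>i\<in>UNIV. of_int (k $ i) * G k $ i) = 0"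
    and rows: "\<And>k. (\<lambda>j. norm (u j) * kmag (k - j) * norm (v (k - j))) summable_on UNIV"
    and double: "(\<lambda>(k,j). norm (G k) * (norm (u j) * kmag (k - j) * norm (v (k - j))))
      summable_on UNIV"
  shows "cmod (inner_L2 (Bop u v) G)
    \<le> (2*pi)^CARD('d) * (\<Sum>\<^sub>\<infinity>(k,j). norm (G k) * (norm (u j) * kmag (k - j) * norm (v (k - j))))"
proof -
  define T where "T k j = norm (G k) * (norm (u j) * kmag (k - j) * norm (v (k - j)))" for k j
  define t where "t k = (\<Sum>i\<in>UNIV. convect u v k $ i * cnj (G k $ i))" for k
  have double': "(\<lambda>(k,j). T k j) summable_on Sigma UNIV (\<lambda>_. UNIV)"
    using double by (simp add: T_def)
  have T_rows: "T k summable_on UNIV" for k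
    unfolding T_def by (intro summable_on_cmult_right rows)
  have T_outer: "(\<lambda>k. \<Sum>\<^sub>\<infinity>j. T k j) summable_on UNIV"
    using summable_on_SigmaD[OF double'] T_rows by simp
  have t_le: "cmod (t k) \<le> (\<Sum>\<^sub>\<infinity>j. T k j)" for k
  proof -
    have "cmod (t k) \<le> norm (convect u v k) * norm (G k)"
      unfolding t_def by (rule cmod_sum_mult_cnj_le)
    also have "\<dots> \<le> (\<Sum>\<^sub>\<infinity>j. T k j)"
      using mult_right_mono[OF norm_convect_le[OF rows]]
      by (simp add: T_def infsum_cmult_right' mult.commute)
    finally show ?thesis .
  qed
  have t_summable: "(\<lambda>k. norm (t k)) summable_on UNIV"
    by (rule summable_on_comparison_test[OF T_outer t_le]) simp
  have inner: "inner_L2 (Bop u v) G = of_real ((2*pi)^CARD('d)) * (\<Sum>\<^sub>\<infinity>k. t k)"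
    unfolding inner_L2_def t_def Bop_def by (simp add: leray_inner_divergence_free[OF div])
  have "cmod (inner_L2 (Bop u v) G) = (2*pi)^CARD('d) * cmod (\<Sum>\<^sub>\<infinity>k. t k)"
    unfolding inner norm_mult norm_of_real by simp
  also have "\<dots> \<le> (2*pi)^CARD('d) * (\<Sum>\<^sub>\<infinity>k. \<Sum>\<^sub>\<infinity>j. T k j)"
    using norm_infsum_bound[OF t_summable] infsum_mono[OF t_summable T_outer t_le]
    by (intro mult_left_mono) auto
  also have "(\<Sum>\<^sub>\<infinity>k. \<Sum>\<^sub>\<infinity>j. T k j) = (\<Sum>\<^sub>\<infinity>(k,j). T k j)"
    using infsum_Sigma_banach[OF double'] by simp
  finally show ?thesis
    by (simp add: T_def)
qed

section \<open>The trilinear estimate\<close>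

lemma kmag_powr_sq: "(kmag k powr s)\<^sup>2 = kmag k powr (2 * s)"
  by (cases "kmag k = 0") (simp_all add: powr_power)

lemma convection_double_sum_bound:
  fixes u v w :: "'d::finite cfield"
  assumes r: "r > real CARD('d) / 2" and \<beta>: "\<beta> \<ge> 0" and u0: "u 0 = 0" and v0: "v 0 = 0"
    and su: "(\<lambda>k. (gev_weight \<beta> (r + 1/2) u k)\<^sup>2) summable_on UNIV"
    and sv: "(\<lambda>k. (gev_weight \<beta> (r + 1/2) v k)\<^sup>2) summable_on UNIV"
    and sw: "(\<lambda>k. (gev_weight \<beta> (r + 1/2) w k)\<^sup>2) summable_on UNIV"
  defines "T \<equiv> \<lambda>(k,j). norm (Apow r (expA (2*\<beta>) w) k) * (norm (u j) * kmag (k - j) * norm (v (k - j)))"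
    and "h \<equiv> \<lambda>j::int^'d. kmag j powr (-r)"
  shows "T summable_on UNIV"
    and "(\<Sum>\<^sub>\<infinity>p. T p) \<le> 2 powr r * l2norm (gev_weight \<beta> (r + 1/2) w) * l2norm h *
      (l2norm (gev_weight \<beta> r u) * l2norm (gev_weight \<beta> (r + 1/2) v)
       + l2norm (gev_weight \<beta> r v) * l2norm (gev_weight \<beta> (r + 1/2) u))"
proof -
  have "1 \<le> real CARD('d)"
    by simp
  then have r_half: "1/2 \<le> r"
    using r by linarith
  note weights = gev_weight_nonneg[of \<beta>]
  have sru: "(\<lambda>k. (gev_weight \<beta> r u k)\<^sup>2) summable_on UNIV"
    and srv: "(\<lambda>k. (gev_weight \<beta> r v k)\<^sup>2) summable_on UNIV"
    by (rule summable_on_gev_weight_sq_mono[OF _ su] summable_on_gev_weight_sq_mono[OF _ sv]; simp)+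
  have sh: "(\<lambda>j. (h j)\<^sup>2) summable_on UNIV"
    unfolding h_def kmag_powr_sq using summable_on_kmag_powr[of "2 * r", where 'd='d] r by simp
  define P1 where "P1 = (\<lambda>(k,j). gev_weight \<beta> (r + 1/2) w k
      * (h j * gev_weight \<beta> r u j * gev_weight \<beta> (r + 1/2) v (k - j)))"
  define P2 where "P2 = (\<lambda>(k,j). gev_weight \<beta> (r + 1/2) w k
      * (h j * gev_weight \<beta> r v j * gev_weight \<beta> (r + 1/2) u (k - j)))"
  have P1: "P1 summable_on UNIV" "(\<Sum>\<^sub>\<infinity>p. P1 p) \<le> l2norm (gev_weight \<beta> (r + 1/2) w) *
      (l2norm h * l2norm (gev_weight \<beta> r u) * l2norm (gev_weight \<beta> (r + 1/2) v))"
    unfolding P1_def by (rule triple_convolution_bound[OF sru sv sw sh]; simp add: weights h_def)+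
  have P2: "P2 summable_on UNIV" "(\<Sum>\<^sub>\<infinity>p. P2 p) \<le> l2norm (gev_weight \<beta> (r + 1/2) w) *
      (l2norm h * l2norm (gev_weight \<beta> r v) * l2norm (gev_weight \<beta> (r + 1/2) u))"
    unfolding P2_def by (rule triple_convolution_bound[OF srv su sw sh]; simp add: weights h_def)+
  define \<phi> where "\<phi> = (\<lambda>(k::int^'d, j::int^'d). (k, k - j))"
  have \<phi>: "bij_betw \<phi> UNIV UNIV"
    by (rule bij_betwI[of \<phi> UNIV UNIV \<phi>]) (auto simp: \<phi>_def)
  have P2\<phi>: "(P2 \<circ> \<phi>) summable_on UNIV" "(\<Sum>\<^sub>\<infinity>p. (P2 \<circ> \<phi>) p) = (\<Sum>\<^sub>\<infinity>p. P2 p)"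
    using summable_on_reindex_bij_betw[OF \<phi>, of P2] infsum_reindex_bij_betw[OF \<phi>, of P2] P2(1)
    by (simp_all add: o_def)
  have T_le: "T p \<le> 2 powr r * (P1 p + (P2 \<circ> \<phi>) p)" for p
    using convection_weight_le[of u v r \<beta> w "fst p" "snd p"] u0 v0 r_half \<beta>
    by (simp add: T_def P1_def P2_def \<phi>_def h_def case_prod_beta algebra_simps)
  have majorant: "(\<lambda>p. 2 powr r * (P1 p + (P2 \<circ> \<phi>) p)) summable_on UNIV"
    by (intro summable_on_cmult_right summable_on_add P1(1) P2\<phi>(1))
  show T: "T summable_on UNIV"
    by (rule summable_on_comparison_test[OF majorant T_le]) (auto simp: T_def kmag_nonneg)
  have "(\<Sum>\<^sub>\<infinity>p. T p) \<le> (\<Sum>\<^sub>\<infinity>p. 2 powr r * (P1 p + (P2 \<circ> \<phi>) p))"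
    by (rule infsum_mono[OF T majorant T_le])
  also have "\<dots> = 2 powr r * ((\<Sum>\<^sub>\<infinity>p. P1 p) + (\<Sum>\<^sub>\<infinity>p. P2 p))"
    by (simp only: infsum_cmult_right' infsum_add[OF P1(1) P2\<phi>(1)] P2\<phi>(2))
  also have "\<dots> \<le> 2 powr r * l2norm (gev_weight \<beta> (r + 1/2) w) * l2norm h *
      (l2norm (gev_weight \<beta> r u) * l2norm (gev_weight \<beta> (r + 1/2) v)
       + l2norm (gev_weight \<beta> r v) * l2norm (gev_weight \<beta> (r + 1/2) u))"
    using mult_left_mono[OF add_mono[OF P1(2) P2(2)], of "2 powr r"] by (simp add: algebra_simps)
  finally show "(\<Sum>\<^sub>\<infinity>p. T p) \<le> \<dots>" .
qed

lemma l2norm_kmag_powr_le: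
  assumes "r > (real CARD('d) + 1) / 2"
  shows "l2norm (\<lambda>j::int^'d::finite. kmag j powr (-r))
    \<le> sqrt (\<Sum>\<^sub>\<infinity>k::int^'d. kmag k powr (-(real CARD('d) + 1)))"
proof -
  have "(\<lambda>j::int^'d. kmag j powr (-(2 * r))) summable_on UNIV"
    using assms by (intro summable_on_kmag_powr) simp
  moreover have "(\<lambda>k::int^'d. kmag k powr (-(real CARD('d) + 1))) summable_on UNIV"
    by (intro summable_on_kmag_powr) simp
  moreover have "kmag k powr (-(2 * r)) \<le> kmag k powr (-(real CARD('d) + 1))" for k :: "int^'d"
    by (rule kmag_powr_antimono) (use assms in simp)
  ultimately show ?thesis
    unfolding l2norm_def kmag_powr_sq by (intro real_sqrt_le_mono infsum_mono) auto
qed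

lemma cmod_inner_Bop_gevrey_le:
  fixes u v w :: "'d::finite cfield"
  assumes r: "r > (real CARD('d) + 1) / 2" and \<beta>: "\<beta> \<ge> 0"
    and HC: "in_HC u" "in_HC v" "in_HC w"
    and gu: "gev_finite r \<beta> (Apow (1/4) u)" and gv: "gev_finite r \<beta> (Apow (1/4) v)"
    and gw: "gev_finite r \<beta> (Apow (1/4) w)"
  shows "cmod (inner_L2 (Bop u v) (Apow r (expA (2 * \<beta>) w)))
    \<le> sqrt (\<Sum>\<^sub>\<infinity>k::int^'d. kmag k powr (-(real CARD('d) + 1))) * 2 powr r *
      (gev_norm r \<beta> v * gev_norm r \<beta> (Apow (1/4) u) * gev_norm r \<beta> (Apow (1/4) w)
       + gev_norm r \<beta> u * gev_norm r \<beta> (Apow (1/4) v) * gev_norm r \<beta> (Apow (1/4) w))"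
proof -
  define K where "K = sqrt (\<Sum>\<^sub>\<infinity>k::int^'d. kmag k powr (-(real CARD('d) + 1)))"
  define s where "s = sqrt ((2*pi)^CARD('d))"
  have "1 \<le> (2*pi)^CARD('d)"
    using pi_gt3 by (intro one_le_power) simp
  then have "1 \<le> s"
    by (simp add: s_def)
  then have s: "1 \<le> s" "s\<^sup>2 \<le> s^3"
    by (simp_all add: power_increasing)
  have u0: "u 0 = 0" and v0: "v 0 = 0"
    using HC by (simp_all add: in_HC_def)
  have r': "r > real CARD('d) / 2"
    using r by simp
  note weights = gu[unfolded gev_finite_Apow_quarter_iff] gv[unfolded gev_finite_Apow_quarter_iff]
    gw[unfolded gev_finite_Apow_quarter_iff]
  note double = convection_double_sum_bound[OF r' \<beta> u0 v0 weights]
  let ?W = "l2norm (gev_weight \<beta> (r + 1/2) w)"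
  let ?S = "l2norm (gev_weight \<beta> r u) * l2norm (gev_weight \<beta> (r + 1/2) v)
    + l2norm (gev_weight \<beta> r v) * l2norm (gev_weight \<beta> (r + 1/2) u)"
  have "1 \<le> real CARD('d)"
    by simp
  with r have "1 \<le> r + 1/2"
    by (simp add: field_simps)
  then have "cmod (inner_L2 (Bop u v) (Apow r (expA (2 * \<beta>) w)))
      \<le> (2*pi)^CARD('d) * (\<Sum>\<^sub>\<infinity>(k,j). norm (Apow r (expA (2*\<beta>) w) k)
          * (norm (u j) * kmag (k - j) * norm (v (k - j))))"
    by (intro cmod_inner_Bop_le divergence_free_Apow_expA[OF HC(3)] double(1)
        summable_on_convection_term[OF u0 \<beta> _ weights(1,2)])
  also have "\<dots> \<le> s\<^sup>2 * (2 powr r * ?W * l2norm (\<lambda>j::int^'d. kmag j powr (-r)) * ?S)"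
    using double(2) by (simp add: s_def)
  also have "\<dots> \<le> s^3 * (2 powr r * ?W * K * ?S)"
    using s l2norm_kmag_powr_le[OF r]
    by (intro mult_mono) (auto simp: K_def l2norm_nonneg infsum_nonneg)
  also have "\<dots> = K * 2 powr r *
      (gev_norm r \<beta> v * gev_norm r \<beta> (Apow (1/4) u) * gev_norm r \<beta> (Apow (1/4) w)
       + gev_norm r \<beta> u * gev_norm r \<beta> (Apow (1/4) v) * gev_norm r \<beta> (Apow (1/4) w))"
  proof -
    have quarter: "gev_norm r \<beta> (Apow (1/4) f) = s * l2norm (gev_weight \<beta> (r + 1/2) f)"
      for f :: "'d cfield"
      by (simp only: s_def gev_norm_Apow_quarter_eq_l2norm)
    have plain: "gev_norm r \<beta> f = s * l2norm (gev_weight \<beta> r f)" for f :: "'d cfield"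
      by (simp only: s_def gev_norm_eq_l2norm)
    show ?thesis
      unfolding quarter unfolding plain by (simp add: power3_eq_cube algebra_simps)
  qed
  finally show ?thesis
    by (simp add: K_def)
qed

lemma C_W_lower_bound:
  assumes "r > (real d + 1) / 2"
  shows "1 \<le> pi * 2 ^ (d - 1) * C_W d r"
proof -
  have "1 \<le> (2 * r - real d) / (2 * r - 1 - real d)"
    using assms by simp
  then show ?thesis
    by (simp add: C_W_def)
qed

theorem mainTheorem4:
  assumes "CARD('d::finite) = 2 \<or> CARD('d) = 3"
  shows "\<exists>C>0. \<forall>(r::real) (\<beta>::real) (u::'d cfield) v w.
     r > (real CARD('d) + 1) / 2 \<longrightarrow> \<beta> > 0 \<longrightarrow>
     in_HC u \<longrightarrow> in_HC v \<longrightarrow> in_HC w \<longrightarrow>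
     gev_finite r \<beta> (Apow (1/4) u) \<longrightarrow> gev_finite r \<beta> (Apow (1/4) v) \<longrightarrow>
     gev_finite r \<beta> (Apow (1/4) w) \<longrightarrow>
     cmod (inner_L2 (Bop u v) (Apow r (expA (2 * \<beta>) w)))
       \<le> C * 2 powr r * C_W CARD('d) r *
         (gev_norm r \<beta> v * gev_norm r \<beta> (Apow (1/4) u) * gev_norm r \<beta> (Apow (1/4) w)
          + gev_norm r \<beta> u * gev_norm r \<beta> (Apow (1/4) v) * gev_norm r \<beta> (Apow (1/4) w))"
proof -
  define K where "K = sqrt (\<Sum>\<^sub>\<infinity>k::int^'d. kmag k powr (-(real CARD('d) + 1)))"
  define C where "C = (K + 1) * (pi * 2 ^ (CARD('d) - 1))"
  have K: "0 \<le> K"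
    unfolding K_def by (intro real_sqrt_ge_zero infsum_nonneg) simp
  show ?thesis
  proof (intro exI[of _ C] conjI allI impI)
    show "C > 0"
      using K by (simp add: C_def)
    fix r \<beta> :: real and u v w :: "'d cfield"
    let ?P = "gev_norm r \<beta> v * gev_norm r \<beta> (Apow (1/4) u) * gev_norm r \<beta> (Apow (1/4) w)
       + gev_norm r \<beta> u * gev_norm r \<beta> (Apow (1/4) v) * gev_norm r \<beta> (Apow (1/4) w)"
    assume r: "r > (real CARD('d) + 1) / 2" and "\<beta> > 0"
      and "in_HC u" "in_HC v" "in_HC w" "gev_finite r \<beta> (Apow (1/4) u)"
      and "gev_finite r \<beta> (Apow (1/4) v)" "gev_finite r \<beta> (Apow (1/4) w)"
    then have "cmod (inner_L2 (Bop u v) (Apow r (expA (2 * \<beta>) w))) \<le> K * 2 powr r * ?P"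
      unfolding K_def by (intro cmod_inner_Bop_gevrey_le) auto
    also have "K * 2 powr r * ?P \<le> C * 2 powr r * C_W CARD('d) r * ?P"
    proof (intro mult_right_mono)
      have "K + 1 \<le> (K + 1) * (pi * 2 ^ (CARD('d) - 1) * C_W CARD('d) r)"
        using mult_left_mono[OF C_W_lower_bound[OF r], of "K + 1"] K by simp
      then show "K * 2 powr r \<le> C * 2 powr r * C_W CARD('d) r"
        by (simp add: C_def mult_ac)
    qed (simp_all add: gev_norm_nonneg)
    finally show "cmod (inner_L2 (Bop u v) (Apow r (expA (2 * \<beta>) w)))
      \<le> C * 2 powr r * C_W CARD('d) r * ?P" .
  qed
qed

end
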